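(* Let $\mathcal{V}$ be the set of positive integers $v$ such that $v \equiv 27 \pmod{30}$ and $\operatorname{ord}_p(-2) \equiv 0 \pmod 4$ for each prime divisor $p$ of $v-2$. Then $\mathcal{V}$ is infinite, and for each $v \in \mathcal{V}$ there exists a Steiner triple system of order $v$ having no parallel class.
   Context: A Steiner triple system of order $v$ is a pair $(V,\mathcal{B})$ where $V$ is a set of $v$ points and $\mathcal{B}$ is a collection of $3$-element subsets of $V$ (triples) such that each unordered pair of distinct points lies in exactly one triple of $\mathcal{B}$. A parallel class in a Steiner triple system $(V,\mathcal{B})$ is a subset of $\mathcal{B}$ that partitions $V$. For a prime $p$, $\operatorname{ord}_p(x)$ denotes the multiplicative order of $x$ in $\mathbb{Z}_p$. *)

theory Defs
  imports "HOL-Number_Theory.Number_Theory"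
begin

definition steiner_triple_system :: "'a set \<Rightarrow> 'a set set \<Rightarrow> bool" where
  "steiner_triple_system V B \<longleftrightarrow>
     finite V \<and>
     (\<forall>b\<in>B. b \<subseteq> V \<and> card b = 3) \<and>
     (\<forall>x\<in>V. \<forall>y\<in>V. x \<noteq> y \<longrightarrow> (\<exists>!b. b \<in> B \<and> x \<in> b \<and> y \<in> b))"

definition parallel_class :: "'a set \<Rightarrow> 'a set set \<Rightarrow> 'a set set \<Rightarrow> bool" where
  "parallel_class V B P \<longleftrightarrow>
     P \<subseteq> B \<and> \<Union>P = V \<and>
     (\<forall>b1\<in>P. \<forall>b2\<in>P. b1 \<noteq> b2 \<longrightarrow> b1 \<inter> b2 = {})"

definition ord_mod :: "nat \<Rightarrow> int \<Rightarrow> nat" where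
  "ord_mod p x = ord p (nat (x mod int p))"

definition V_set :: "nat set" where
  "V_set = {v. v > 0 \<and> v mod 30 = 27 \<and>
      (\<forall>p. prime p \<and> p dvd (v - 2) \<longrightarrow> ord_mod p (-2) mod 4 = 0)}"

end

theory Submission
  imports Defs
begin

text \<open>
  Write \<open>v = n + 2\<close> with \<open>n = 5m\<close>; then \<open>n\<close> is odd and prime to 3. Since \<open>4\<close> divides
  \<open>ord\<^sub>p(-2)\<close> for every \<open>p | m\<close>, no \<open>x \<noteq> 0 (mod m)\<close> satisfies \<open>x \<equiv> \<plusminus>(-2)\<^sup>k x\<close> with \<open>k\<close> odd,
  so the nonzero residues modulo \<open>m\<close> carry a colouring \<open>\<chi>\<close> with \<open>\<chi>(-2x) \<noteq> \<chi>(x)\<close> and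
  \<open>\<chi>(-x) = \<chi>(x)\<close>. On \<open>\<int>\<^sub>n \<union> {\<infinity>\<^sub>0, \<infinity>\<^sub>1}\<close> take a Fano plane on \<open>{\<infinity>\<^sub>0, \<infinity>\<^sub>1} \<union> m\<int>\<^sub>n\<close>, the
  triples \<open>{\<infinity>\<^bsub>\<chi>(x)\<^esub>, x, -2x}\<close> for \<open>x \<notin> m\<int>\<^sub>n\<close>, and all remaining zero-sum triples.

  Weigh residues by their value and the infinite points by \<open>0\<close>; a parallel class has total
  weight divisible by \<open>n\<close>. If \<open>\<infinity>\<^sub>0, \<infinity>\<^sub>1\<close> share the block \<open>{\<infinity>\<^sub>0, \<infinity>\<^sub>1, 4m}\<close>, every other block
  of the class has weight \<open>\<equiv> 0 (mod n)\<close> (a Fano line avoiding both infinite points passes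
  through \<open>4m\<close>), so \<open>n | 4m\<close>. Otherwise the remaining blocks have weight \<open>\<equiv> 0 (mod m)\<close>, while
  the block through \<open>\<infinity>\<^sub>c\<close> is a Fano line or has weight \<open>\<equiv> -T\<close> with \<open>T \<noteq> 0 (mod m)\<close> and \<open>\<chi>(T) = c\<close>:
  two Fano lines meet, and otherwise the two colours would have to agree.
\<close>

section \<open>A colouring of the residues modulo \<open>m\<close>\<close>

lemma even_exponent_if_neg2_power_cong:
  fixes m x e :: int
  assumes m_pos: "m > 0"
    and four_dvd_ord: "\<And>p. prime p \<Longrightarrow> int p dvd m \<Longrightarrow> ord_mod p (-2) mod 4 = 0"
    and not_dvd: "\<not> m dvd x" and e: "e = 1 \<or> e = -1"
    and cong: "[(-2)^j * x = e * x] (mod m)"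
  shows "even j"
proof -
  \<comment> \<open>a prime \<open>p\<close> dividing \<open>m / gcd x m\<close> divides \<open>(-2)\<^sup>2\<^sup>j - 1\<close>, so \<open>4 | ord\<^sub>p(-2) | 2j\<close>\<close>
  define g where "g = gcd x m"
  have g_pos: "g > 0" using m_pos g_def by simp
  then obtain x' d where x': "x = x' * g" and d: "m = d * g" and coprime: "coprime x' d"
    using gcd_coprime_exists[of x m] g_pos by (auto simp: g_def[symmetric])
  have "(-2)^j * x - e * x = (((-2)^j - e) * x') * g" using x' by (simp add: algebra_simps)
  then have "d * g dvd (((-2)^j - e) * x') * g"
    using cong d by (simp add: cong_iff_dvd_diff)
  then have "d dvd ((-2)^j - e) * x'" using g_pos by simp
  then have d_dvd: "d dvd (-2)^j - e" using coprime by (simp add: coprime_commute coprime_dvd_mult_left_iff)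
  have "d \<noteq> 1" using not_dvd x' d by auto
  moreover have d_pos: "d > 0" using m_pos g_pos d by (simp add: zero_less_mult_iff)
  ultimately have "nat d \<noteq> 1" by simp
  then obtain p where p: "prime p" "p dvd nat d"
    using prime_factor_nat by blast
  have p_dvd_d: "int p dvd d" using p(2) d_pos by (metis int_nat_eq less_imp_le of_nat_dvd_iff)
  have "((-2::int)^j - e) * ((-2)^j + e) = (-2)^(2*j) - 1"
    using e by (auto simp: algebra_simps power_mult power2_eq_square)
  then have "int p dvd (-2)^(2*j) - 1"
    using p_dvd_d d_dvd by (metis dvd_mult2 dvd_trans)
  then have "[(-2::int) ^ (2*j) = 1] (mod int p)" by (simp add: cong_iff_dvd_diff)
  moreover have "[((-2) mod int p) ^ (2*j) = (-2) ^ (2*j)] (mod int p)"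
    by (intro cong_pow) (simp add: cong_def)
  ultimately have "[((-2) mod int p) ^ (2*j) = 1] (mod int p)" using cong_trans by blast
  moreover have "int (nat ((-2) mod int p)) = (-2) mod int p"
    using p(1) by (simp add: prime_gt_0_nat)
  ultimately have "[nat ((-2) mod int p) ^ (2*j) = 1] (mod p)"
    by (metis cong_int_iff of_nat_1 of_nat_power)
  then have "ord_mod p (-2) dvd 2 * j" unfolding ord_mod_def by (rule ord_divides[THEN iffD1])
  moreover have "4 dvd ord_mod p (-2)" using four_dvd_ord[OF p(1)] p_dvd_d d by (simp add: mod_0_imp_dvd)
  ultimately have "4 dvd 2 * j" by (rule dvd_trans[rotated])
  then show ?thesis by presburger
qed

locale neg2_parity =
  fixes m :: int
  assumes m_pos: "m > 0" and m_odd: "odd m"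
    and four_dvd_ord: "\<And>p. prime p \<Longrightarrow> int p dvd m \<Longrightarrow> ord_mod p (-2) mod 4 = 0"
begin

definition neg2_related :: "int \<Rightarrow> int \<Rightarrow> bool" where
  "neg2_related x y \<longleftrightarrow>
     (\<exists>i j e. (e = 1 \<or> e = -1) \<and> [(-2)^i * y = e * (-2)^j * x] (mod m))"

definition class_rep :: "int \<Rightarrow> int" where
  "class_rep x = int (LEAST k::nat. neg2_related x (int k))"

definition rep_exponents :: "int \<Rightarrow> nat \<Rightarrow> nat \<Rightarrow> bool" where
  "rep_exponents x i j \<longleftrightarrow>
     (\<exists>e. (e = 1 \<or> e = -1) \<and> [(-2)^i * x = e * (-2)^j * class_rep x] (mod m))"

text \<open>
  For \<open>x \<noteq> 0 (mod m)\<close>, \<open>colour x\<close> is the parity of \<open>i + j\<close> in \<open>(-2)\<^sup>i x \<equiv> \<plusminus>(-2)\<^sup>j (class_rep x)\<close>; all such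
  pairs give the same parity (rep_exponents_parity).
\<close>

definition colour :: "int \<Rightarrow> bool" where
  "colour x \<longleftrightarrow> (\<exists>i j. rep_exponents x i j \<and> even (i + j))"

lemma coprime_neg2_power: "coprime ((-2::int)^i) m"
  using m_odd by simp

lemma neg2_related_sym:
  assumes "neg2_related x y" shows "neg2_related y x"
proof -
  obtain i j e where e: "e = 1 \<or> e = -1" and c: "[(-2)^i * y = e * (-2)^j * x] (mod m)"
    using assms unfolding neg2_related_def by blast
  have "[e * ((-2)^i * y) = e * (e * (-2)^j * x)] (mod m)" using c by (rule cong_scalar_left)
  also have "e * (e * (-2)^j * x) = (-2)^j * x" using e by auto
  finally have "[(-2)^j * x = e * (-2)^i * y] (mod m)" by (simp add: cong_sym_eq mult.assoc)
  then show ?thesis using e unfolding neg2_related_def by blast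
qed

lemma neg2_related_trans:
  assumes "neg2_related x y" "neg2_related y z" shows "neg2_related x z"
proof -
  obtain i j e where e: "e = 1 \<or> e = -1" and c: "[(-2)^i * y = e * (-2)^j * x] (mod m)"
    using assms(1) unfolding neg2_related_def by blast
  obtain i' j' e' where e': "e' = 1 \<or> e' = -1" and c': "[(-2)^i' * z = e' * (-2)^j' * y] (mod m)"
    using assms(2) unfolding neg2_related_def by blast
  have "[(-2)^i * ((-2)^i' * z) = (-2)^i * (e' * (-2)^j' * y)] (mod m)"
    using c' by (rule cong_scalar_left)
  moreover have "[e' * (-2)^j' * ((-2)^i * y) = e' * (-2)^j' * (e * (-2)^j * x)] (mod m)"
    using c by (rule cong_scalar_left)
  ultimately have "[(-2)^(i + i') * z = (e' * e) * (-2)^(j' + j) * x] (mod m)"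
    by (simp add: power_add ac_simps cong_trans)
  moreover have "e' * e = 1 \<or> e' * e = -1" using e e' by auto
  ultimately show ?thesis unfolding neg2_related_def by blast
qed

lemma neg2_related_cong:
  assumes "[x = x'] (mod m)" shows "neg2_related x x'"
  unfolding neg2_related_def
  by (rule exI[of _ 0], rule exI[of _ 0], rule exI[of _ 1]) (simp add: assms cong_sym)

lemma neg2_related_times_neg2: "neg2_related x (-2 * x)"
  unfolding neg2_related_def by (rule exI[of _ 0], rule exI[of _ 1], rule exI[of _ 1]) simp

lemma neg2_related_uminus: "neg2_related x (- x)"
  unfolding neg2_related_def by (rule exI[of _ 0], rule exI[of _ 0], rule exI[of _ "-1"]) simp

lemma neg2_related_dvd_iff:
  assumes "neg2_related x y" shows "m dvd x \<longleftrightarrow> m dvd y"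
proof -
  have "m dvd y" if rel: "neg2_related x y" and dvd: "m dvd x" for x y
  proof -
    obtain i j e where c: "[(-2)^i * y = e * (-2)^j * x] (mod m)"
      using rel unfolding neg2_related_def by blast
    have "m dvd (-2)^i * y" using c dvd by (simp add: cong_dvd_iff)
    then show ?thesis using coprime_neg2_power[of i]
      by (simp add: coprime_commute coprime_dvd_mult_right_iff)
  qed
  then show ?thesis using assms neg2_related_sym by blast
qed

lemma neg2_related_class_rep: "neg2_related x (class_rep x)"
proof -
  have "neg2_related x (int (nat (x mod m)))"
    using m_pos by (simp add: neg2_related_cong cong_sym cong_mod_left)
  then have "\<exists>k::nat. neg2_related x (int k)" by blast
  then show ?thesis unfolding class_rep_def by (rule LeastI_ex)
qed

lemma class_rep_eqI:
  assumes "neg2_related x y" shows "class_rep x = class_rep y"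
proof -
  have "neg2_related x z = neg2_related y z" for z
    using assms neg2_related_sym neg2_related_trans by blast
  then show ?thesis unfolding class_rep_def by simp
qed

lemma rep_exponents_exist: "\<exists>i j. rep_exponents x i j"
  using neg2_related_sym[OF neg2_related_class_rep[of x]]
  unfolding neg2_related_def rep_exponents_def by blast

lemma neg2_power_cong_even:
  assumes not_dvd: "\<not> m dvd x" and e: "e = 1 \<or> e = -1"
    and c: "[(-2)^a * x = e * (-2)^b * x] (mod m)"
  shows "even (a + b)"
proof (cases "a \<le> b")
  case True
  have "[(-2)^a * x = (-2)^a * (e * (-2)^(b - a) * x)] (mod m)"
    using c True by (simp add: power_add[symmetric] ac_simps)
  then have "[x = e * (-2)^(b - a) * x] (mod m)"
    using cong_mult_lcancel coprime_neg2_power by blast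
  then have "[e * x = e * (e * (-2)^(b - a) * x)] (mod m)" by (rule cong_scalar_left)
  moreover have "e * (e * (-2)^(b - a) * x) = (-2)^(b - a) * x" using e by auto
  ultimately have "[(-2)^(b - a) * x = e * x] (mod m)" by (simp add: cong_sym_eq)
  then have "even (b - a)"
    using even_exponent_if_neg2_power_cong[OF m_pos four_dvd_ord not_dvd e] by blast
  then show ?thesis using True by auto
next
  case False
  have "[(-2)^b * ((-2)^(a - b) * x) = (-2)^b * (e * x)] (mod m)"
    using c False by (simp add: power_add[symmetric] ac_simps)
  then have "[(-2)^(a - b) * x = e * x] (mod m)"
    using cong_mult_lcancel coprime_neg2_power by blast
  then have "even (a - b)"
    using even_exponent_if_neg2_power_cong[OF m_pos four_dvd_ord not_dvd e] by blast
  then show ?thesis using False by auto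
qed

lemma rep_exponents_parity:
  assumes not_dvd: "\<not> m dvd x" and "rep_exponents x i1 j1" "rep_exponents x i2 j2"
  shows "even (i1 + j1) = even (i2 + j2)"
proof -
  let ?r = "class_rep x"
  obtain e1 where e1: "e1 = 1 \<or> e1 = -1" and c1: "[(-2)^i1 * x = e1 * (-2)^j1 * ?r] (mod m)"
    using assms(2) unfolding rep_exponents_def by blast
  obtain e2 where e2: "e2 = 1 \<or> e2 = -1" and c2: "[(-2)^i2 * x = e2 * (-2)^j2 * ?r] (mod m)"
    using assms(3) unfolding rep_exponents_def by blast
  have r_not_dvd: "\<not> m dvd ?r"
    using not_dvd neg2_related_dvd_iff[OF neg2_related_class_rep] by blast
  have "e1 * ((-2)^(i2 + j1) * ?r) = (-2)^i2 * (e1 * (-2)^j1 * ?r)"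
    by (simp add: power_add ac_simps)
  also have "[(-2)^i2 * (e1 * (-2)^j1 * ?r) = (-2)^i2 * ((-2)^i1 * x)] (mod m)"
    using cong_scalar_left[OF c1, of "(-2)^i2"] by (rule cong_sym)
  also have "(-2)^i2 * ((-2)^i1 * x) = (-2)^i1 * ((-2)^i2 * x)"
    by (rule mult.left_commute)
  also have "[(-2)^i1 * ((-2)^i2 * x) = (-2)^i1 * (e2 * (-2)^j2 * ?r)] (mod m)"
    using c2 by (rule cong_scalar_left)
  finally have "[e1 * (e1 * ((-2)^(i2 + j1) * ?r)) = e1 * ((-2)^i1 * (e2 * (-2)^j2 * ?r))] (mod m)"
    by (rule cong_scalar_left)
  moreover have "e1 * (e1 * ((-2)^(i2 + j1) * ?r)) = (-2)^(i2 + j1) * ?r"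
    using e1 by auto
  moreover have "e1 * ((-2)^i1 * (e2 * (-2)^j2 * ?r)) = (e1 * e2) * (-2)^(i1 + j2) * ?r"
    by (simp add: power_add ac_simps)
  ultimately have "[(-2)^(i2 + j1) * ?r = (e1 * e2) * (-2)^(i1 + j2) * ?r] (mod m)"
    by simp
  moreover have "e1 * e2 = 1 \<or> e1 * e2 = -1" using e1 e2 by auto
  ultimately have "even (i2 + j1 + (i1 + j2))"
    using neg2_power_cong_even[OF r_not_dvd] by blast
  then show ?thesis by auto
qed

lemma colour_iff:
  assumes "\<not> m dvd x" "rep_exponents x i j" shows "colour x \<longleftrightarrow> even (i + j)"
  using assms rep_exponents_parity unfolding colour_def by blast

lemma not_dvd_times_neg2: "\<not> m dvd x \<Longrightarrow> \<not> m dvd (-2 * x)"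
  using neg2_related_dvd_iff[OF neg2_related_times_neg2] by blast

lemma colour_neg2_mult:
  assumes not_dvd: "\<not> m dvd x" shows "colour (-2 * x) \<longleftrightarrow> \<not> colour x"
proof -
  obtain i j where r: "rep_exponents x i j" using rep_exponents_exist by blast
  have "rep_exponents (-2 * x) i (Suc j)"
  proof -
    obtain e where e: "e = 1 \<or> e = -1" and c: "[(-2)^i * x = e * (-2)^j * class_rep x] (mod m)"
      using r unfolding rep_exponents_def by blast
    have "[(-2) * ((-2)^i * x) = (-2) * (e * (-2)^j * class_rep x)] (mod m)"
      using c by (rule cong_scalar_left)
    then have "[(-2)^i * (-2 * x) = e * (-2)^Suc j * class_rep (-2 * x)] (mod m)"
      using class_rep_eqI[OF neg2_related_times_neg2] by (simp add: ac_simps)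
    then show ?thesis using e unfolding rep_exponents_def by blast
  qed
  then show ?thesis
    using colour_iff[OF not_dvd r] colour_iff[OF not_dvd_times_neg2[OF not_dvd]] by simp
qed

lemma colour_uminus:
  assumes not_dvd: "\<not> m dvd x" shows "colour (- x) \<longleftrightarrow> colour x"
proof -
  obtain i j where r: "rep_exponents x i j" using rep_exponents_exist by blast
  have "rep_exponents (- x) i j"
  proof -
    obtain e where e: "e = 1 \<or> e = -1" and c: "[(-2)^i * x = e * (-2)^j * class_rep x] (mod m)"
      using r unfolding rep_exponents_def by blast
    have "[(-1) * ((-2)^i * x) = (-1) * (e * (-2)^j * class_rep x)] (mod m)"
      using c by (rule cong_scalar_left)
    then have "[(-2)^i * (- x) = (- e) * (-2)^j * class_rep (- x)] (mod m)"
      using class_rep_eqI[OF neg2_related_uminus] by simp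
    moreover have "- e = 1 \<or> - e = -1" using e by auto
    ultimately show ?thesis unfolding rep_exponents_def by blast
  qed
  moreover have "\<not> m dvd (- x)" using not_dvd by simp
  ultimately show ?thesis using colour_iff[OF not_dvd r] colour_iff by blast
qed

lemma colour_cong:
  assumes "[x = x'] (mod m)" shows "colour x \<longleftrightarrow> colour x'"
proof -
  have "class_rep x = class_rep x'" using class_rep_eqI[OF neg2_related_cong[OF assms]] .
  moreover have "[(-2)^i * x = z] (mod m) \<longleftrightarrow> [(-2)^i * x' = z] (mod m)" for i z
    using cong_scalar_left[OF assms, of "(-2)^i"] by (meson cong_sym cong_trans)
  ultimately have "rep_exponents x = rep_exponents x'"
    unfolding rep_exponents_def by (intro ext) simp
  then show ?thesis unfolding colour_def by simp
qed

lemma colour_eq_if_dvd_add: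
  assumes "\<not> m dvd x" "m dvd x + y" shows "colour y \<longleftrightarrow> colour x"
proof -
  have "[y = - x] (mod m)" using assms(2) by (simp add: cong_iff_dvd_diff add.commute)
  then show ?thesis using colour_cong colour_uminus[OF assms(1)] by blast
qed

end

section \<open>Fano plane and Steiner quasigroups\<close>

lemma xor_cancel_left: "xor a (xor a b) = (b::nat)"
  by (simp add: xor.assoc[symmetric])

lemma fano_xor_closed:
  fixes a b :: nat
  assumes "a \<in> {1,2,3,4,5,6,7}" "b \<in> {1,2,3,4,5,6,7}" "a \<noteq> b"
  shows "xor a b \<in> {1,2,3,4,5,6,7} \<and> xor a b \<noteq> a \<and> xor a b \<noteq> b"
  using assms by auto

definition fano_lines :: "nat set set" where
  "fano_lines = {{1,2,3}, {1,4,5}, {1,6,7}, {2,4,6}, {2,5,7}, {3,4,7}, {3,5,6}}"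

lemma fano_lines_meet: "L \<in> fano_lines \<Longrightarrow> L' \<in> fano_lines \<Longrightarrow> L \<inter> L' \<noteq> {}"
  unfolding fano_lines_def by (elim insertE emptyE; simp)

lemma fano_line_xor:
  fixes a b :: nat
  assumes ab: "a \<in> {1,2,3,4,5,6,7}" "b \<in> {1,2,3,4,5,6,7}" "a \<noteq> b"
  shows "{a, b, xor a b} \<in> fano_lines"
proof -
  have "\<exists>L\<in>fano_lines. {a, b, xor a b} \<subseteq> L"
    using ab unfolding fano_lines_def by (elim insertE emptyE; simp)
  then obtain L where L: "L \<in> fano_lines" "{a, b, xor a b} \<subseteq> L" by blast
  have "card {a, b, xor a b} = 3" using fano_xor_closed[OF ab] ab(3) by simp
  moreover have "finite L" "card L = 3" using L(1) unfolding fano_lines_def by auto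
  ultimately have "{a, b, xor a b} = L" using L(2) by (simp add: card_subset_eq)
  then show ?thesis using L(1) by simp
qed

locale steiner_quasigroup =
  fixes V :: "'a set" and t :: "'a \<Rightarrow> 'a \<Rightarrow> 'a"
  assumes finite_V: "finite V"
    and t_closed: "\<And>x y. x \<in> V \<Longrightarrow> y \<in> V \<Longrightarrow> x \<noteq> y \<Longrightarrow> t x y \<in> V"
    and t_ne: "\<And>x y. x \<in> V \<Longrightarrow> y \<in> V \<Longrightarrow> x \<noteq> y \<Longrightarrow> t x y \<noteq> y"
    and t_cancel: "\<And>x y. x \<in> V \<Longrightarrow> y \<in> V \<Longrightarrow> x \<noteq> y \<Longrightarrow> t x (t x y) = y"
    and t_commute: "\<And>x y. x \<in> V \<Longrightarrow> y \<in> V \<Longrightarrow> x \<noteq> y \<Longrightarrow> t y x = t x y"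
begin

definition blocks :: "'a set set" where
  "blocks = {{x, y, t x y} | x y. x \<in> V \<and> y \<in> V \<and> x \<noteq> y}"

lemma block_of_pair: "x \<in> V \<Longrightarrow> y \<in> V \<Longrightarrow> x \<noteq> y \<Longrightarrow> {x, y, t x y} \<in> blocks"
  unfolding blocks_def by force

lemma block_eq:
  assumes b: "b \<in> blocks" and xy: "x \<in> b" "y \<in> b" "x \<noteq> y"
  shows "b = {x, y, t x y}"
proof -
  obtain u w where uw: "u \<in> V" "w \<in> V" "u \<noteq> w" and b_eq: "b = {u, w, t u w}"
    using b unfolding blocks_def by blast
  have uw_t: "t u w \<in> V" "t u w \<noteq> u" "t u w \<noteq> w"
    using t_closed[OF uw] t_ne[OF uw] t_commute[OF uw] t_ne[OF uw(2,1)] uw(3) by auto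
  have "t u (t u w) = w" "t (t u w) u = w" "t w (t u w) = u" "t (t u w) w = u"
    using t_cancel[OF uw] t_commute[OF uw] t_cancel[OF uw(2,1) uw(3)[symmetric]]
      t_commute[OF uw(1) uw_t(1) uw_t(2)[symmetric]] t_commute[OF uw(2) uw_t(1) uw_t(3)[symmetric]]
    by simp_all
  then show ?thesis using xy b_eq t_commute[OF uw] by auto
qed

lemma t_ne_left: "x \<in> V \<Longrightarrow> y \<in> V \<Longrightarrow> x \<noteq> y \<Longrightarrow> t x y \<noteq> x"
  using t_ne t_commute by metis

lemma block_has_other_point: "b \<in> blocks \<Longrightarrow> \<exists>y\<in>b. y \<noteq> x"
  unfolding blocks_def by force

lemma blocks_subset: "b \<in> blocks \<Longrightarrow> b \<subseteq> V"
  unfolding blocks_def using t_closed by blast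

lemma steiner_triple_system: "steiner_triple_system V blocks"
proof -
  have "card b = 3" if b: "b \<in> blocks" for b
  proof -
    obtain u w where uw: "u \<in> V" "w \<in> V" "u \<noteq> w" and "b = {u, w, t u w}"
      using b unfolding blocks_def by blast
    then show ?thesis using t_ne[OF uw] t_ne[OF uw(2,1)] t_commute[OF uw] uw(3) by auto
  qed
  moreover have "\<exists>!b. b \<in> blocks \<and> x \<in> b \<and> y \<in> b" if "x \<in> V" "y \<in> V" "x \<noteq> y" for x y
    using block_of_pair[OF that] block_eq that(3) by blast
  ultimately show ?thesis
    unfolding steiner_triple_system_def using finite_V blocks_subset by blast
qed

end

lemma steiner_triple_system_image:
  assumes inj: "inj_on f V" and sts: "steiner_triple_system V B"
  shows "steiner_triple_system (f ` V) ((`) f ` B)"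
proof -
  have blocks: "b \<subseteq> V" "card b = 3" if "b \<in> B" for b
    using sts that unfolding steiner_triple_system_def by auto
  have pair: "\<exists>!c. c \<in> (`) f ` B \<and> f x \<in> c \<and> f y \<in> c"
    if xy: "x \<in> V" "y \<in> V" "f x \<noteq> f y" for x y
  proof -
    have mem: "f x \<in> f ` b \<longleftrightarrow> x \<in> b" "f y \<in> f ` b \<longleftrightarrow> y \<in> b" if "b \<in> B" for b
      using inj_on_image_mem_iff[OF inj _ blocks(1)[OF that]] xy(1,2) by blast+
    have "x \<noteq> y" using xy(3) by blast
    then have "\<exists>!b. b \<in> B \<and> x \<in> b \<and> y \<in> b"
      using sts xy(1,2) unfolding steiner_triple_system_def by blast
    then obtain b where b: "b \<in> B" "x \<in> b" "y \<in> b"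
      and uniq: "\<And>b'. b' \<in> B \<Longrightarrow> x \<in> b' \<Longrightarrow> y \<in> b' \<Longrightarrow> b' = b"
      by blast
    show ?thesis
    proof
      show "f ` b \<in> (`) f ` B \<and> f x \<in> f ` b \<and> f y \<in> f ` b" using b by blast
    next
      fix c assume "c \<in> (`) f ` B \<and> f x \<in> c \<and> f y \<in> c"
      then obtain b' where "b' \<in> B" "c = f ` b'" "x \<in> b'" "y \<in> b'" using mem by blast
      then show "c = f ` b" using uniq by blast
    qed
  qed
  have "finite (f ` V)" using sts unfolding steiner_triple_system_def by simp
  moreover have "\<forall>c\<in>(`) f ` B. c \<subseteq> f ` V \<and> card c = 3"
  proof
    fix c assume "c \<in> (`) f ` B"
    then obtain b where b: "b \<in> B" "c = f ` b" by blast
    then show "c \<subseteq> f ` V \<and> card c = 3"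
      using card_image[OF inj_on_subset[OF inj blocks(1)[OF b(1)]]] blocks[OF b(1)] by auto
  qed
  moreover have "\<forall>a\<in>f ` V. \<forall>a'\<in>f ` V. a \<noteq> a' \<longrightarrow> (\<exists>!c. c \<in> (`) f ` B \<and> a \<in> c \<and> a' \<in> c)"
  proof (intro ballI impI)
    fix a a' assume "a \<in> f ` V" "a' \<in> f ` V" "a \<noteq> a'"
    then obtain x y where xy: "x \<in> V" "y \<in> V" "f x \<noteq> f y" and "a = f x" "a' = f y" by blast
    then show "\<exists>!c. c \<in> (`) f ` B \<and> a \<in> c \<and> a' \<in> c" using pair[OF xy] by simp
  qed
  ultimately show ?thesis unfolding steiner_triple_system_def by (intro conjI)
qed

lemma parallel_class_preimage:
  assumes inj: "inj_on f V" and blocks: "\<And>b. b \<in> B \<Longrightarrow> b \<subseteq> V"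
    and pc: "parallel_class (f ` V) ((`) f ` B) Q"
  shows "parallel_class V B {b \<in> B. f ` b \<in> Q}"
proof -
  let ?P = "{b \<in> B. f ` b \<in> Q}"
  have Q: "Q \<subseteq> (`) f ` B" "\<Union>Q = f ` V" and
    disj: "\<And>q1 q2. q1 \<in> Q \<Longrightarrow> q2 \<in> Q \<Longrightarrow> q1 \<noteq> q2 \<Longrightarrow> q1 \<inter> q2 = {}"
    using pc unfolding parallel_class_def by blast+
  have "x \<in> \<Union>?P" if x: "x \<in> V" for x
  proof -
    obtain q where "q \<in> Q" "f x \<in> q" using Q(2) x by blast
    moreover obtain b where "b \<in> B" "q = f ` b" using Q(1) \<open>q \<in> Q\<close> by blast
    ultimately show ?thesis using inj_on_image_mem_iff[OF inj x blocks] by blast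
  qed
  then have "\<Union>?P = V" using blocks by blast
  moreover have "b1 \<inter> b2 = {}" if "b1 \<in> ?P" "b2 \<in> ?P" "b1 \<noteq> b2" for b1 b2
  proof -
    have "f ` b1 \<noteq> f ` b2"
      using inj_on_image_eq_iff[OF inj blocks blocks] that by blast
    then have "f ` b1 \<inter> f ` b2 = {}" using disj that by blast
    then show ?thesis by blast
  qed
  ultimately show ?thesis unfolding parallel_class_def by blast
qed

lemma sum_parallel_class:
  assumes "parallel_class V B P" "finite V"
  shows "sum (sum f) P = sum f V"
proof -
  have P: "\<Union>P = V" "\<And>b1 b2. b1 \<in> P \<Longrightarrow> b2 \<in> P \<Longrightarrow> b1 \<noteq> b2 \<Longrightarrow> b1 \<inter> b2 = {}"
    using assms(1) unfolding parallel_class_def by blast+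
  have "\<forall>b\<in>P. finite b" using P(1) assms(2) by (metis Union_upper finite_subset)
  then have "sum f (\<Union>P) = sum (sum f) P" using P(2) by (simp add: sum.Union_disjoint)
  then show ?thesis using P(1) by simp
qed

lemma dvd_sum_subset:
  fixes h :: "'a \<Rightarrow> 'b::comm_ring_1"
  assumes "finite A" "S \<subseteq> A" "d dvd sum h A" "\<And>a. a \<in> A - S \<Longrightarrow> d dvd h a"
  shows "d dvd sum h S"
proof -
  have "sum h A = sum h S + sum h (A - S)" using assms(1,2) by (metis sum.subset_diff add.commute)
  moreover have "d dvd sum h (A - S)" using assms(4) by (rule dvd_sum)
  ultimately show ?thesis using assms(3) by (metis dvd_add_right_iff add.commute)
qed

locale sts_construction = neg2_parity +
  fixes n :: int
  assumes n_eq: "n = 5 * m" and not_3_dvd_n: "\<not> 3 dvd n"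
begin

text \<open>
  The residues modulo \<open>n\<close> are represented by \<open>0..<n\<close>; \<open>n = infty True\<close> and
  \<open>n + 1 = infty False\<close> are the two points at infinity.
\<close>

definition points :: "int set" where
  "points = {0..<n + 2}"

definition fano_points :: "int set" where
  "fano_points = {n, n + 1} \<union> {x. 0 \<le> x \<and> x < n \<and> m dvd x}"

definition infty :: "bool \<Rightarrow> int" where
  "infty c = (if c then n else n + 1)"

text \<open>
  The labels identify \<open>fano_points\<close> with the Fano plane whose lines are the triples with zero
  xor: the infinite points get \<open>1\<close> and \<open>6\<close>, \<open>k * m\<close> gets \<open>k + 2\<close> for \<open>k < 4\<close>, and \<open>4 * m\<close> gets
  \<open>7\<close>, so that \<open>{n, n + 1, 4 * m}\<close> is a line.
\<close>

definition fano_label :: "int \<Rightarrow> nat" where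
  "fano_label x =
     (if x = n then 1 else if x = n + 1 then 6 else if x = 4 * m then 7 else nat (x div m) + 2)"

definition fano_point :: "nat \<Rightarrow> int" where
  "fano_point l =
     (if l = 1 then n else if l = 6 then n + 1 else if l = 7 then 4 * m else (int l - 2) * m)"

definition times_neg2 :: "int \<Rightarrow> int" where
  "times_neg2 x = (-2 * x) mod n"

text \<open>\<open>(n + 1) div 2\<close> inverts \<open>2\<close> modulo \<open>n\<close>, so \<open>half_neg x \<equiv> -x/2\<close>.\<close>

definition half_neg :: "int \<Rightarrow> int" where
  "half_neg x = (- (x * ((n + 1) div 2))) mod n"

definition third :: "int \<Rightarrow> int \<Rightarrow> int" where
  "third x y =
     (if x \<in> fano_points \<and> y \<in> fano_points then fano_point (xor (fano_label x) (fano_label y))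
      else if x = n \<or> x = n + 1 then (if colour y = (x = n) then times_neg2 y else half_neg y)
      else if y = n \<or> y = n + 1 then (if colour x = (y = n) then times_neg2 x else half_neg x)
      else if y = times_neg2 x then infty (colour x)
      else if x = times_neg2 y then infty (colour y)
      else (- x - y) mod n)"

lemma n_pos: "n > 0"
  using m_pos n_eq by simp

lemma m_dvd_n: "m dvd n"
  using n_eq by simp

lemma n_dvd_2_times_iff: "n dvd 2 * y \<longleftrightarrow> n dvd y"
proof -
  have "coprime n 2" using m_odd n_eq by simp
  then show ?thesis by (rule coprime_dvd_mult_right_iff)
qed

lemma m_dvd_2_times_iff: "m dvd 2 * y \<longleftrightarrow> m dvd y"
proof -
  have "coprime m 2" using m_odd by simp
  then show ?thesis by (rule coprime_dvd_mult_right_iff)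
qed

lemma mod_n_eq_iff: "x \<in> {0..<n} \<Longrightarrow> a mod n = x \<longleftrightarrow> n dvd a - x"
  by (metis atLeastLessThan_iff mod_eq_dvd_iff mod_pos_pos_trivial)

lemma residue_eq_iff: "x \<in> {0..<n} \<Longrightarrow> y \<in> {0..<n} \<Longrightarrow> x = y \<longleftrightarrow> n dvd x - y"
  by (metis atLeastLessThan_iff mod_eq_dvd_iff mod_pos_pos_trivial)

lemma residue_eq_0_if_dvd_3_times:
  assumes "x \<in> {0..<n}" "n dvd 3 * x" shows "x = 0"
proof -
  have "coprime 3 n" using not_3_dvd_n by (intro prime_imp_coprime) simp_all
  then have "coprime n 3" by (rule coprime_commute[THEN iffD1])
  then have "n dvd x" using assms(2) by (simp add: coprime_dvd_mult_right_iff)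
  then show ?thesis using residue_eq_iff[OF assms(1), of 0] n_pos by simp
qed

lemma n_dvd_add_neg_sum_mod: "n dvd x + y + (- x - y) mod n"
proof -
  have "n dvd (- x - y) mod n - (- x - y)" by (simp add: mod_eq_dvd_iff[symmetric])
  also have "(- x - y) mod n - (- x - y) = x + y + (- x - y) mod n" by simp
  finally show ?thesis .
qed

lemma times_neg2_range: "times_neg2 x \<in> {0..<n}"
  using n_pos by (simp add: times_neg2_def)

lemma half_neg_range: "half_neg x \<in> {0..<n}"
  using n_pos by (simp add: half_neg_def)

lemma dvd_times_neg2: "n dvd times_neg2 x + 2 * x"
  using mod_mod_trivial[of "-2 * x" n] unfolding times_neg2_def
  by (metis diff_minus_eq_add mod_eq_dvd_iff mult_minus_left)

lemma dvd_half_neg: "n dvd 2 * half_neg x + x"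
proof -
  define c where "c = (n + 1) div 2"
  have c: "2 * c = n + 1" using m_odd n_eq unfolding c_def by presburger
  have "n dvd half_neg x + x * c"
    using mod_mod_trivial[of "- (x * c)" n] unfolding half_neg_def c_def[symmetric]
    by (metis diff_minus_eq_add mod_eq_dvd_iff)
  then have "n dvd 2 * (half_neg x + x * c) - n * x"
    using dvd_diff[OF dvd_mult dvd_triv_left] by blast
  also have "2 * (half_neg x + x * c) - n * x = 2 * half_neg x + x * (2 * c) - n * x"
    by (simp add: algebra_simps)
  also have "\<dots> = 2 * half_neg x + x" unfolding c by (simp add: algebra_simps)
  finally show ?thesis .
qed

lemma times_neg2_half_neg: "x \<in> {0..<n} \<Longrightarrow> times_neg2 (half_neg x) = x"
  using residue_eq_iff[OF times_neg2_range] dvd_diff[OF dvd_times_neg2 dvd_half_neg, of "half_neg x" x]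
  by simp

lemma half_neg_times_neg2:
  assumes "x \<in> {0..<n}" shows "half_neg (times_neg2 x) = x"
proof -
  have "n dvd (2 * half_neg (times_neg2 x) + times_neg2 x) - (times_neg2 x + 2 * x)"
    using dvd_half_neg dvd_times_neg2 by (rule dvd_diff)
  also have "(2 * half_neg (times_neg2 x) + times_neg2 x) - (times_neg2 x + 2 * x)
      = 2 * (half_neg (times_neg2 x) - x)" by (simp add: algebra_simps)
  finally have "n dvd half_neg (times_neg2 x) - x" by (simp only: n_dvd_2_times_iff)
  then show ?thesis using residue_eq_iff[OF half_neg_range assms] by simp
qed

lemma times_neg2_neq:
  assumes "x \<in> {0..<n}" "x \<noteq> 0" shows "times_neg2 x \<noteq> x"
proof
  assume "times_neg2 x = x"
  then have "n dvd 3 * x" using dvd_times_neg2[of x] by simp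
  then show False using residue_eq_0_if_dvd_3_times assms by blast
qed

lemma half_neg_neq:
  assumes "x \<in> {0..<n}" "x \<noteq> 0" shows "half_neg x \<noteq> x"
proof
  assume "half_neg x = x"
  then have "n dvd 3 * x" using dvd_half_neg[of x] by simp
  then show False using residue_eq_0_if_dvd_3_times assms by blast
qed

lemma half_neg_neq_times_neg2:
  assumes "x \<in> {0..<n}" "x \<noteq> 0" shows "half_neg x \<noteq> times_neg2 x"
proof
  assume eq: "half_neg x = times_neg2 x"
  have "n dvd 2 * (times_neg2 x + 2 * x) - (2 * half_neg x + x)"
    using dvd_times_neg2 dvd_half_neg by (intro dvd_diff dvd_mult)
  then have "n dvd 3 * x" using eq by (simp add: algebra_simps)
  then show False using residue_eq_0_if_dvd_3_times assms by blast
qed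

lemma m_dvd_times_neg2_iff: "m dvd times_neg2 x \<longleftrightarrow> m dvd x"
proof -
  have "m dvd times_neg2 x + 2 * x" using dvd_times_neg2 m_dvd_n by (rule dvd_trans[rotated])
  then show ?thesis by (metis dvd_add_right_iff dvd_add_left_iff m_dvd_2_times_iff)
qed

lemma m_dvd_half_neg_iff: "m dvd half_neg x \<longleftrightarrow> m dvd x"
proof -
  have "m dvd 2 * half_neg x + x" using dvd_half_neg m_dvd_n by (rule dvd_trans[rotated])
  then show ?thesis by (metis dvd_add_right_iff dvd_add_left_iff m_dvd_2_times_iff)
qed

lemma colour_times_neg2:
  assumes "\<not> m dvd x" shows "colour (times_neg2 x) \<longleftrightarrow> \<not> colour x"
proof -
  have "m dvd times_neg2 x + 2 * x" using dvd_times_neg2 m_dvd_n by (rule dvd_trans[rotated])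
  then have "[times_neg2 x = -2 * x] (mod m)" by (simp add: cong_iff_dvd_diff)
  then show ?thesis using colour_cong colour_neg2_mult[OF assms] by blast
qed

lemma colour_half_neg:
  assumes x: "\<not> m dvd x" shows "colour (half_neg x) \<longleftrightarrow> \<not> colour x"
proof -
  have "m dvd 2 * half_neg x + x" using dvd_half_neg m_dvd_n by (rule dvd_trans[rotated])
  then have "[x = -2 * half_neg x] (mod m)" by (simp add: cong_iff_dvd_diff add.commute)
  moreover have "\<not> m dvd half_neg x" using x m_dvd_half_neg_iff by simp
  ultimately show ?thesis using colour_cong colour_neg2_mult by blast
qed

lemma infty_simps [simp]: "infty True = n" "infty False = n + 1"
  by (simp_all add: infty_def)

lemma infty_in_fano_points: "infty c \<in> fano_points"
  by (simp add: infty_def fano_points_def)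

lemma infty_not_residue: "infty c \<notin> {0..<n}"
  by (simp add: infty_def)

lemma infty_in_points: "infty c \<in> points"
  using n_pos by (simp add: infty_def points_def)

lemma points_cases:
  assumes "x \<in> points" obtains "x \<in> {0..<n}" | c where "x = infty c"
proof -
  have "0 \<le> x" "x < n + 2" using assms by (simp_all add: points_def)
  then consider "x < n" | "x = n" | "x = n + 1" by linarith
  then show ?thesis
    by cases (use that(1) \<open>0 \<le> x\<close> that(2)[of True] that(2)[of False] in simp_all)
qed

lemma fano_points_subset: "fano_points \<subseteq> points"
  using n_pos by (auto simp: fano_points_def points_def)

lemma residue_not_fano_iff: "x \<in> {0..<n} \<Longrightarrow> x \<notin> fano_points \<longleftrightarrow> \<not> m dvd x"
  by (auto simp: fano_points_def)

lemma non_fano_point: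
  assumes "x \<in> points" "x \<notin> fano_points" shows "x \<in> {0..<n}" "\<not> m dvd x"
  using assms(1) residue_not_fano_iff assms(2) infty_in_fano_points
  by (cases rule: points_cases; blast)+

lemma fano_points_cases:
  assumes "x \<in> fano_points"
  obtains "x = n" | "x = n + 1" | k where "k \<in> {0..<5}" "x = k * m"
proof -
  consider "x = n" | "x = n + 1" | "0 \<le> x" "x < n" "m dvd x"
    using assms by (auto simp: fano_points_def)
  then show ?thesis
  proof cases
    case 3
    then obtain k where k: "x = m * k" by blast
    have "0 \<le> k" using 3(1) m_pos k by (simp add: zero_le_mult_iff)
    moreover have "k < 5" using 3(2) m_pos k n_eq by simp
    ultimately show ?thesis using that(3)[of k] k by (simp add: mult.commute)
  qed (use that in blast)+
qed

lemma fano_label_mult: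
  assumes "k \<in> {0..<5}"
  shows "fano_label (k * m) = (if k = 4 then 7 else nat k + 2)"
proof -
  have "k * m < 5 * m" using assms m_pos by simp
  then have "k * m < n" using n_eq by linarith
  moreover have "k * m = 4 * m \<longleftrightarrow> k = 4" using m_pos by simp
  ultimately show ?thesis using m_pos by (simp add: fano_label_def)
qed

lemma fano_point_label: "x \<in> fano_points \<Longrightarrow> fano_point (fano_label x) = x"
proof (erule fano_points_cases)
  fix k assume k: "k \<in> {0..<5}" "x = k * m"
  then consider "k = 0" | "k = 1" | "k = 2" | "k = 3" | "k = 4" by fastforce
  then show ?thesis by cases (use k fano_label_mult[OF k(1)] in \<open>simp_all add: fano_point_def\<close>)
qed (simp_all add: fano_label_def fano_point_def)

lemma fano_label_range: "x \<in> fano_points \<Longrightarrow> fano_label x \<in> {1,2,3,4,5,6,7}"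
proof (erule fano_points_cases)
  fix k assume k: "k \<in> {0..<5}" "x = k * m"
  then consider "k = 0" | "k = 1" | "k = 2" | "k = 3" | "k = 4" by fastforce
  then show ?thesis by cases (use k fano_label_mult[OF k(1)] in simp_all)
qed (simp_all add: fano_label_def)

lemma mult_m_in_fano_points:
  assumes "k \<in> {0..<5}" shows "k * m \<in> fano_points"
proof -
  have "k * m < 5 * m" using assms m_pos by simp
  then have "k * m < n" using n_eq by linarith
  then show ?thesis using assms m_pos by (simp add: fano_points_def)
qed

lemma fano_label_surj:
  assumes "l \<in> {1,2,3,4,5,6,7}" shows "\<exists>x\<in>fano_points. fano_label x = l"
proof -
  have K: "n \<in> fano_points" "n + 1 \<in> fano_points" "fano_label n = 1" "fano_label (n + 1) = 6"
    by (simp_all add: fano_points_def fano_label_def)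
  have km: "k * m \<in> fano_points \<and> fano_label (k * m) = (if k = 4 then 7 else nat k + 2)"
    if "k \<in> {0..<5}" for k
    using mult_m_in_fano_points fano_label_mult that by blast
  from assms consider "l = 1" | "l = 6" | "l = 2" | "l = 3" | "l = 4" | "l = 5" | "l = 7"
    by auto
  then show ?thesis
  proof cases
    case 3 then show ?thesis using km[of 0] by (intro bexI[of _ "0 * m"]) auto
  next
    case 4 then show ?thesis using km[of 1] by (intro bexI[of _ "1 * m"]) auto
  next
    case 5 then show ?thesis using km[of 2] by (intro bexI[of _ "2 * m"]) auto
  next
    case 6 then show ?thesis using km[of 3] by (intro bexI[of _ "3 * m"]) auto
  next
    case 7 then show ?thesis using km[of 4] by (intro bexI[of _ "4 * m"]) auto
  qed (use K in blast)+
qed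

lemma fano_point_in_fano_points: "l \<in> {1,2,3,4,5,6,7} \<Longrightarrow> fano_point l \<in> fano_points"
  using fano_label_surj fano_point_label by metis

lemma fano_label_point: "l \<in> {1,2,3,4,5,6,7} \<Longrightarrow> fano_label (fano_point l) = l"
  using fano_label_surj fano_point_label by metis

lemma third_fano:
  "x \<in> fano_points \<Longrightarrow> y \<in> fano_points \<Longrightarrow> third x y = fano_point (xor (fano_label x) (fano_label y))"
  by (simp add: third_def)

lemma third_infty_left:
  "y \<notin> fano_points \<Longrightarrow> third (infty c) y = (if colour y = c then times_neg2 y else half_neg y)"
  using infty_in_fano_points[of c] by (cases c) (simp_all add: third_def)

lemma third_infty_right:
  "x \<notin> fano_points \<Longrightarrow> third x (infty c) = (if colour x = c then times_neg2 x else half_neg x)"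
  using infty_in_fano_points[of c] infty_in_fano_points[of "\<not> c"]
  by (cases c) (auto simp: third_def)

lemma third_residues:
  assumes "x \<in> {0..<n}" "y \<in> {0..<n}" "\<not> (x \<in> fano_points \<and> y \<in> fano_points)"
  shows "third x y = (if y = times_neg2 x then infty (colour x)
                      else if x = times_neg2 y then infty (colour y) else (- x - y) mod n)"
proof -
  have "(x \<in> fano_points \<and> y \<in> fano_points) = False" "(x = n \<or> x = n + 1) = False"
    "(y = n \<or> y = n + 1) = False"
    using assms by auto
  then show ?thesis unfolding third_def by (simp only: if_False)
qed

lemma third_fano_props:
  assumes x: "x \<in> fano_points" and y: "y \<in> fano_points" and xy: "x \<noteq> y"
  shows "third x y \<in> fano_points \<and> third x y \<noteq> y \<and> third x (third x y) = y"
proof -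
  let ?l = "xor (fano_label x) (fano_label y)"
  have labels: "fano_label x \<in> {1,2,3,4,5,6,7}" "fano_label y \<in> {1,2,3,4,5,6,7}"
    using x y fano_label_range by blast+
  have "fano_label x \<noteq> fano_label y" using xy fano_point_label x y by metis
  then have l: "?l \<in> {1,2,3,4,5,6,7}" "?l \<noteq> fano_label y"
    using fano_xor_closed[OF labels] by auto
  have in_K: "third x y \<in> fano_points" and label: "fano_label (third x y) = ?l"
    using third_fano[OF x y] fano_point_in_fano_points[OF l(1)] fano_label_point[OF l(1)] by simp_all
  have "third x (third x y) = fano_point (fano_label y)"
    using third_fano[OF x in_K] label by (simp add: xor_cancel_left)
  then show ?thesis using in_K label l(2) fano_point_label[OF y] by auto
qed

lemma third_infty_left_props:
  assumes y: "y \<in> {0..<n}" "\<not> m dvd y"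
  shows "third (infty c) y \<in> {0..<n} \<and> \<not> m dvd third (infty c) y \<and> third (infty c) y \<noteq> y
    \<and> third (infty c) (third (infty c) y) = y"
proof -
  have y0: "y \<noteq> 0" using y(2) by auto
  have not_K: "z \<notin> fano_points" if "z \<in> {0..<n}" "\<not> m dvd z" for z
    using residue_not_fano_iff that by blast
  show ?thesis
  proof (cases "colour y = c")
    case True
    define z where "z = times_neg2 y"
    have z: "z \<in> {0..<n}" "\<not> m dvd z" using times_neg2_range m_dvd_times_neg2_iff y(2) z_def by auto
    have "colour z \<noteq> c" using colour_times_neg2[OF y(2)] True z_def by simp
    then have "third (infty c) z = y"
      using third_infty_left[OF not_K[OF z]] half_neg_times_neg2[OF y(1)] z_def by simp
    then show ?thesis
      using third_infty_left[OF not_K[OF y]] True z z_def times_neg2_neq[OF y(1) y0] by simp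
  next
    case False
    define z where "z = half_neg y"
    have z: "z \<in> {0..<n}" "\<not> m dvd z" using half_neg_range m_dvd_half_neg_iff y(2) z_def by auto
    have "colour z = c" using colour_half_neg[OF y(2)] False z_def by simp
    then have "third (infty c) z = y"
      using third_infty_left[OF not_K[OF z]] times_neg2_half_neg[OF y(1)] z_def by simp
    then show ?thesis
      using third_infty_left[OF not_K[OF y]] False z z_def half_neg_neq[OF y(1) y0] by simp
  qed
qed

lemma third_infty_right_props:
  assumes x: "x \<in> {0..<n}" "\<not> m dvd x"
  shows "third x (infty c) \<in> {0..<n} \<and> third x (third x (infty c)) = infty c"
proof -
  have x0: "x \<noteq> 0" using x(2) by auto
  have not_K: "z \<notin> fano_points" if "z \<in> {0..<n}" "\<not> m dvd z" for z
    using residue_not_fano_iff that by blast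
  show ?thesis
  proof (cases "colour x = c")
    case True
    define z where "z = times_neg2 x"
    have z: "z \<in> {0..<n}" "\<not> m dvd z" using times_neg2_range m_dvd_times_neg2_iff x(2) z_def by auto
    have "third x z = infty c"
      using third_residues[OF x(1) z(1)] not_K[OF x] True z_def by simp
    then show ?thesis using third_infty_right[OF not_K[OF x]] True z z_def by simp
  next
    case False
    define z where "z = half_neg x"
    have z: "z \<in> {0..<n}" "\<not> m dvd z" using half_neg_range m_dvd_half_neg_iff x(2) z_def by auto
    have "colour z = c" using colour_half_neg[OF x(2)] False z_def by simp
    moreover have "z \<noteq> times_neg2 x" using half_neg_neq_times_neg2[OF x(1) x0] z_def by simp
    moreover have "x = times_neg2 z" using times_neg2_half_neg[OF x(1)] z_def by simp
    ultimately have "third x z = infty c"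
      using third_residues[OF x(1) z(1)] not_K[OF x] by simp
    then show ?thesis using third_infty_right[OF not_K[OF x]] False z z_def by simp
  qed
qed

lemma times_neg2_not_involutive:
  assumes x: "x \<in> {0..<n}" and xy: "x \<noteq> y" and y: "y = times_neg2 x"
  shows "x \<noteq> times_neg2 y"
proof
  assume "x = times_neg2 y"
  then have "half_neg x = y" using half_neg_times_neg2 y times_neg2_range by metis
  moreover have "x \<noteq> 0" using xy y by (auto simp: times_neg2_def)
  ultimately show False using half_neg_neq_times_neg2[OF x] y by simp
qed

lemma third_residues_props:
  assumes x: "x \<in> {0..<n}" and y: "y \<in> {0..<n}" and xy: "x \<noteq> y"
    and not_K: "\<not> (x \<in> fano_points \<and> y \<in> fano_points)"
  shows "third x y \<in> points \<and> third x y \<noteq> y \<and> third x (third x y) = y"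
proof (cases "y = times_neg2 x")
  case True
  then have "x \<notin> fano_points"
    using not_K x y m_dvd_times_neg2_iff residue_not_fano_iff by blast
  then have "third x (infty (colour x)) = y" using third_infty_right True by simp
  moreover have "third x y = infty (colour x)" using third_residues[OF x y not_K] True by simp
  moreover have "infty (colour x) \<noteq> y" using infty_not_residue y by metis
  ultimately show ?thesis using infty_in_points by simp
next
  case neg2_y: False
  show ?thesis
  proof (cases "x = times_neg2 y")
    case True
    then have y_not_dvd: "\<not> m dvd y"
      using not_K x y m_dvd_times_neg2_iff residue_not_fano_iff by blast
    then have "x \<notin> fano_points" using True m_dvd_times_neg2_iff residue_not_fano_iff[OF x] by simp
    moreover have "colour x \<longleftrightarrow> \<not> colour y" using colour_times_neg2[OF y_not_dvd] True by simp
    moreover have "half_neg x = y" using half_neg_times_neg2[OF y] True by simp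
    ultimately have "third x (infty (colour y)) = y" using third_infty_right by simp
    moreover have "third x y = infty (colour y)" using third_residues[OF x y not_K] neg2_y True by simp
    moreover have "infty (colour y) \<noteq> y" using infty_not_residue y by metis
    ultimately show ?thesis using infty_in_points by simp
  next
    case False
    define z where "z = (- x - y) mod n"
    have third_xy: "third x y = z" using third_residues[OF x y not_K] neg2_y False z_def by simp
    have z: "z \<in> {0..<n}" using n_pos z_def by simp
    have sum: "n dvd x + y + z" using n_dvd_add_neg_sum_mod z_def by simp
    have dx: "n dvd times_neg2 x + 2 * x" and dy: "n dvd times_neg2 y + 2 * y"
      and dz: "n dvd times_neg2 z + 2 * z"
      by (rule dvd_times_neg2)+
    have "z \<noteq> x"
    proof
      assume "z = x"
      have "n dvd (times_neg2 x + 2 * x) - (x + y + z)" using dx sum by (rule dvd_diff)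
      then have "n dvd times_neg2 x - y" using \<open>z = x\<close> by (simp add: algebra_simps)
      then show False using neg2_y residue_eq_iff[OF times_neg2_range y] by metis
    qed
    have "z \<noteq> y"
    proof
      assume "z = y"
      have "n dvd (times_neg2 y + 2 * y) - (x + y + z)" using dy sum by (rule dvd_diff)
      then have "n dvd times_neg2 y - x" using \<open>z = y\<close> by (simp add: algebra_simps)
      then show False using False residue_eq_iff[OF times_neg2_range x] by metis
    qed
    have not_K_xz: "\<not> (x \<in> fano_points \<and> z \<in> fano_points)"
    proof
      assume "x \<in> fano_points \<and> z \<in> fano_points"
      then have "m dvd x" "m dvd z" using residue_not_fano_iff x z by blast+
      moreover have "m dvd x + y + z" using sum m_dvd_n by (rule dvd_trans[rotated])
      ultimately have "m dvd y" by (metis dvd_add_left_iff dvd_add_right_iff)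
      then show False using not_K \<open>m dvd x\<close> residue_not_fano_iff x y by blast
    qed
    have "z \<noteq> times_neg2 x"
    proof
      assume "z = times_neg2 x"
      have "n dvd (x + y + z) - (times_neg2 x + 2 * x)" using sum dx by (rule dvd_diff)
      then have "n dvd y - x" using \<open>z = times_neg2 x\<close> by (simp add: algebra_simps)
      then show False using xy residue_eq_iff[OF y x] by metis
    qed
    moreover have "x \<noteq> times_neg2 z"
    proof
      assume "x = times_neg2 z"
      have "n dvd (times_neg2 y + 2 * y) + ((times_neg2 z + 2 * z) - 2 * (x + y + z))"
        using dvd_add[OF dy dvd_diff[OF dz dvd_mult[OF sum]]] .
      then have "n dvd times_neg2 y - x" using \<open>x = times_neg2 z\<close> by (simp add: algebra_simps)
      then show False using False residue_eq_iff[OF times_neg2_range x] by metis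
    qed
    moreover have "(- x - z) mod n = y"
    proof -
      have "(- x - z) - y = - (x + y + z)" by simp
      then show ?thesis using mod_n_eq_iff[OF y] sum by (simp only: dvd_minus_iff)
    qed
    ultimately have "third x z = y" using third_residues[OF x z not_K_xz] by simp
    then show ?thesis using third_xy z \<open>z \<noteq> y\<close> by (simp add: points_def)
  qed
qed

lemma third_props:
  assumes x: "x \<in> points" and y: "y \<in> points" and xy: "x \<noteq> y"
  shows "third x y \<in> points \<and> third x y \<noteq> y \<and> third x (third x y) = y"
proof (cases "x \<in> fano_points \<and> y \<in> fano_points")
  case True
  then show ?thesis using third_fano_props[OF _ _ xy] fano_points_subset by blast
next
  case not_K: False
  show ?thesis
  proof (cases rule: points_cases[OF x])
    case (2 c)
    then have "y \<notin> fano_points" using not_K infty_in_fano_points by blast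
    then show ?thesis
      using third_infty_left_props[of y c] non_fano_point[OF y] 2 by (auto simp: points_def)
  next
    case x_residue: 1
    show ?thesis
    proof (cases rule: points_cases[OF y])
      case (2 c)
      then have "x \<notin> fano_points" using not_K infty_in_fano_points by blast
      then show ?thesis
        using third_infty_right_props[of x c] non_fano_point[OF x] 2 infty_not_residue
        by (auto simp: points_def)
    qed (use third_residues_props x_residue xy not_K in blast)
  qed
qed

lemma third_commute:
  assumes x: "x \<in> points" and y: "y \<in> points" and xy: "x \<noteq> y"
  shows "third y x = third x y"
proof (cases "x \<in> fano_points \<and> y \<in> fano_points")
  case True
  then show ?thesis by (simp add: third_fano xor.commute)
next
  case not_K: False
  show ?thesis
  proof (cases rule: points_cases[OF x])
    case (2 c)
    then show ?thesis using not_K infty_in_fano_points third_infty_left third_infty_right by auto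
  next
    case x_residue: 1
    show ?thesis
    proof (cases rule: points_cases[OF y])
      case (2 c)
      then show ?thesis using not_K infty_in_fano_points third_infty_left third_infty_right by auto
    next
      case 1
      have "\<not> (y = times_neg2 x \<and> x = times_neg2 y)"
        using times_neg2_not_involutive[OF x_residue xy] by blast
      moreover have "(- y - x) mod n = (- x - y) mod n"
        by (rule arg_cong[where f = "\<lambda>a. a mod n"]) simp
      ultimately show ?thesis
        using third_residues[OF x_residue 1 not_K] third_residues[OF 1 x_residue] not_K by auto
    qed
  qed
qed

sublocale steiner_quasigroup points third
proof
  show "finite points" by (simp add: points_def)
qed (use third_props third_commute in blast)+

definition weight :: "int \<Rightarrow> int" where
  "weight x = (if x < n then x else 0)"

lemma n_dvd_sum_weight_points: "n dvd sum weight points"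
proof -
  have "points = {0..n - 1} \<union> {n, n + 1}" using n_pos by (auto simp: points_def)
  then have "sum weight points = sum weight {0..n - 1}" by (simp add: weight_def)
  also have "\<dots> = \<Sum>{0..n - 1}" by (rule sum.cong) (auto simp: weight_def)
  also have "\<dots> = (n - 1) * n div 2" using Sum_Icc_int[of 0 "n - 1"] n_pos by simp
  also have "\<dots> = n * ((n - 1) div 2)"
  proof -
    have "2 dvd n - 1" using m_odd n_eq by presburger
    then show ?thesis by (simp add: div_mult_swap mult.commute)
  qed
  finally show ?thesis by simp
qed

lemma fano_line_of_block:
  assumes b: "b \<in> blocks" and K: "b \<subseteq> fano_points"
  shows "fano_label ` b \<in> fano_lines"
proof -
  obtain x y where xy: "x \<in> points" "y \<in> points" "x \<noteq> y" and b_eq: "b = {x, y, third x y}"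
    using b unfolding blocks_def by blast
  have xy_K: "x \<in> fano_points" "y \<in> fano_points" using K b_eq by auto
  then have labels: "fano_label x \<in> {1,2,3,4,5,6,7}" "fano_label y \<in> {1,2,3,4,5,6,7}"
    using fano_label_range by blast+
  have "fano_label x \<noteq> fano_label y" using xy(3) fano_point_label xy_K by metis
  moreover have "fano_label (third x y) = xor (fano_label x) (fano_label y)"
    using third_fano[OF xy_K] fano_label_point fano_xor_closed[OF labels] \<open>fano_label x \<noteq> fano_label y\<close>
    by simp
  ultimately show ?thesis using fano_line_xor[OF labels] b_eq by simp
qed

lemma fano_blocks_meet:
  assumes "b1 \<in> blocks" "b1 \<subseteq> fano_points" "b2 \<in> blocks" "b2 \<subseteq> fano_points"
  shows "b1 \<inter> b2 \<noteq> {}"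
proof -
  obtain x1 x2 where "x1 \<in> b1" "x2 \<in> b2" "fano_label x1 = fano_label x2"
    using fano_lines_meet[OF fano_line_of_block[OF assms(1,2)] fano_line_of_block[OF assms(3,4)]]
    by blast
  then have "x1 = x2" using assms(2,4) fano_point_label by (metis subsetD)
  then show ?thesis using \<open>x1 \<in> b1\<close> \<open>x2 \<in> b2\<close> by blast
qed

lemma third_infinities: "third n (n + 1) = 4 * m"
  by (simp add: third_def fano_points_def fano_label_def fano_point_def)

lemma fano_block_contains_4m:
  assumes b: "b \<in> blocks" "b \<subseteq> fano_points" and "n \<notin> b" "n + 1 \<notin> b"
  shows "4 * m \<in> b"
proof -
  have "{n, n + 1, 4 * m} \<in> blocks"
    using block_of_pair[of n "n + 1"] third_infinities infty_in_points[of True] infty_in_points[of False]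
    by simp
  moreover have "{n, n + 1, 4 * m} \<subseteq> fano_points"
    using third_infinities infty_in_fano_points[of True] infty_in_fano_points[of False]
      fano_point_in_fano_points[of 7] by (simp add: fano_point_def)
  ultimately have "{n, n + 1, 4 * m} \<inter> b \<noteq> {}" using fano_blocks_meet b by blast
  then show ?thesis using assms(3,4) by blast
qed

lemma m_dvd_sum_weight_fano:
  assumes "b \<subseteq> fano_points" shows "m dvd sum weight b"
proof (rule dvd_sum)
  fix x assume "x \<in> b"
  then show "m dvd weight x" using assms by (auto simp: weight_def fano_points_def)
qed

lemma sum_weight_triple:
  assumes "x \<in> points" "y \<in> points" "x \<noteq> y"
  shows "sum weight {x, y, third x y} = weight x + weight y + weight (third x y)"
  using t_ne[OF assms] t_ne_left[OF assms] assms(3) by simp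

lemma finite_block_weight:
  assumes b: "b \<in> blocks" and inf: "n \<notin> b" "n + 1 \<notin> b"
  shows "b \<subseteq> fano_points \<or> n dvd sum weight b"
proof -
  obtain x y where xy: "x \<in> points" "y \<in> points" "x \<noteq> y" and b_eq: "b = {x, y, third x y}"
    using b unfolding blocks_def by blast
  have residues: "z \<in> {0..<n}" if z: "z \<in> b" for z
  proof -
    have "z \<in> points" using z blocks_subset[OF b] by blast
    then show ?thesis using z inf by (cases rule: points_cases) (auto simp: infty_def split: if_splits)
  qed
  then have x: "x \<in> {0..<n}" and y: "y \<in> {0..<n}" and z: "third x y \<in> {0..<n}"
    using b_eq by auto
  show ?thesis
  proof (cases "x \<in> fano_points \<and> y \<in> fano_points")
    case True
    then show ?thesis using third_fano_props[OF _ _ xy(3)] b_eq by blast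
  next
    case False
    then have "third x y = (- x - y) mod n"
      using third_residues[OF x y False] z infty_not_residue by (auto split: if_splits)
    then have "n dvd x + y + third x y" using n_dvd_add_neg_sum_mod by simp
    then show ?thesis
      using sum_weight_triple[OF xy] b_eq x y z by (simp add: weight_def)
  qed
qed

lemma infty_block_weight:
  assumes b: "b \<in> blocks" and inf: "infty c \<in> b" "infty (\<not> c) \<notin> b"
  shows "b \<subseteq> fano_points \<or> (\<exists>T. \<not> m dvd T \<and> colour T = c \<and> m dvd sum weight b + T)"
proof -
  obtain y where y: "y \<in> b" "y \<noteq> infty c" using block_has_other_point[OF b] by blast
  have b_eq: "b = {infty c, y, third (infty c) y}" using block_eq[OF b inf(1) y(1)] y(2) by simp
  have y_point: "y \<in> points" using blocks_subset[OF b] y(1) by blast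
  show ?thesis
  proof (cases "y \<in> fano_points")
    case True
    then show ?thesis
      using third_fano_props[OF infty_in_fano_points True y(2)[symmetric]] b_eq infty_in_fano_points
      by auto
  next
    case False
    then have y_res: "y \<in> {0..<n}" "\<not> m dvd y"
      using non_fano_point y_point by blast+
    have sum_b: "sum weight b = y + third (infty c) y"
      using sum_weight_triple[OF infty_in_points y_point y(2)[symmetric]] b_eq y_res
        third_infty_left_props[OF y_res, of c] by (simp add: weight_def infty_def)
    show ?thesis
    proof (cases "colour y = c")
      case True
      then have "n dvd sum weight b + y"
        using sum_b third_infty_left[OF False] dvd_times_neg2[of y] by (simp add: algebra_simps)
      then show ?thesis using True y_res m_dvd_n dvd_trans by blast
    next
      case F: False
      then have "n dvd sum weight b + half_neg y"
        using sum_b third_infty_left[OF False] dvd_half_neg[of y] by (simp add: algebra_simps)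
      moreover have "\<not> m dvd half_neg y" "colour (half_neg y) = c"
        using y_res(2) m_dvd_half_neg_iff colour_half_neg F by auto
      ultimately show ?thesis using m_dvd_n dvd_trans by blast
    qed
  qed
qed

lemma sum_weight_infinity_block:
  assumes "b \<in> blocks" "n \<in> b" "n + 1 \<in> b" shows "sum weight b = 4 * m"
proof -
  have "b = {n, n + 1, 4 * m}" using block_eq[OF assms] third_infinities by simp
  moreover have "4 * m < n" "0 < m" using n_eq m_pos by simp_all
  ultimately show ?thesis by (simp add: weight_def)
qed

lemma infinity_blocks_weight:
  assumes ba: "ba \<in> blocks" "n \<in> ba" and bb: "bb \<in> blocks" "n + 1 \<in> bb"
    and disj: "ba \<inter> bb = {}"
  shows "\<not> m dvd sum weight ba + sum weight bb"
proof
  assume sum: "m dvd sum weight ba + sum weight bb"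
  have "ba \<subseteq> fano_points \<or> (\<exists>T. \<not> m dvd T \<and> colour T \<and> m dvd sum weight ba + T)"
    using infty_block_weight[OF ba(1), of True] ba(2) bb(2) disj by auto
  moreover have "bb \<subseteq> fano_points \<or> (\<exists>T. \<not> m dvd T \<and> \<not> colour T \<and> m dvd sum weight bb + T)"
    using infty_block_weight[OF bb(1), of False] ba(2) bb(2) disj by auto
  ultimately show False
  proof (elim disjE exE conjE)
    assume "ba \<subseteq> fano_points" "bb \<subseteq> fano_points"
    then show False using fano_blocks_meet ba(1) bb(1) disj by blast
  next
    fix T assume "ba \<subseteq> fano_points" "\<not> m dvd T" "m dvd sum weight bb + T"
    then show False using m_dvd_sum_weight_fano sum by (metis dvd_add_right_iff)
  next
    fix T assume "bb \<subseteq> fano_points" "\<not> m dvd T" "m dvd sum weight ba + T"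
    then show False using m_dvd_sum_weight_fano sum by (metis dvd_add_right_iff add.commute)
  next
    fix T T' assume T: "\<not> m dvd T" "colour T" "m dvd sum weight ba + T"
      and T': "\<not> colour T'" "m dvd sum weight bb + T'"
    have "m dvd (sum weight ba + T) + (sum weight bb + T') - (sum weight ba + sum weight bb)"
      using dvd_diff[OF dvd_add[OF T(3) T'(2)] sum] .
    then have "m dvd T + T'" by (simp add: algebra_simps)
    then show False using colour_eq_if_dvd_add[OF T(1)] T(2) T'(1) by blast
  qed
qed

lemma no_parallel_class: "\<not> parallel_class points blocks P"
proof
  assume pc: "parallel_class points blocks P"
  have P: "P \<subseteq> blocks" "\<Union>P = points"
    and disj: "\<And>b1 b2. b1 \<in> P \<Longrightarrow> b2 \<in> P \<Longrightarrow> b1 \<noteq> b2 \<Longrightarrow> b1 \<inter> b2 = {}"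
    using pc unfolding parallel_class_def by blast+
  have "finite (\<Union>P)" using P(2) finite_V by simp
  then have finite_P: "finite P" by (rule finite_UnionD)
  have total: "n dvd sum (sum weight) P"
    unfolding sum_parallel_class[OF pc finite_V] by (rule n_dvd_sum_weight_points)
  have "n \<in> \<Union>P" "n + 1 \<in> \<Union>P" using P(2) infty_in_points[of True] infty_in_points[of False] by simp_all
  then obtain ba bb where ba: "ba \<in> P" "n \<in> ba" and bb: "bb \<in> P" "n + 1 \<in> bb" by blast
  have ba_block: "ba \<in> blocks" and bb_block: "bb \<in> blocks" using P(1) ba(1) bb(1) by blast+
  show False
  proof (cases "ba = bb")
    case True
    have others: "n dvd sum weight g" if g: "g \<in> P - {ba}" for g
    proof -
      have "ba = {n, n + 1, 4 * m}"
        using block_eq[OF ba_block ba(2), of "n + 1"] bb(2) True third_infinities by simp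
      moreover have "g \<inter> ba = {}" using disj g ba(1) by blast
      ultimately have "n \<notin> g" "n + 1 \<notin> g" "4 * m \<notin> g" by blast+
      moreover have "g \<in> blocks" using g P(1) by blast
      ultimately show ?thesis using finite_block_weight[of g] fano_block_contains_4m[of g] by blast
    qed
    have "n dvd sum (sum weight) {ba}"
      by (rule dvd_sum_subset[OF finite_P _ total]) (use ba(1) others in auto)
    then have "n dvd 4 * m" using sum_weight_infinity_block[OF ba_block ba(2)] bb(2) True by simp
    moreover have "0 < 4 * m" "4 * m < n" using m_pos n_eq by simp_all
    ultimately show False using zdvd_imp_le[of n "4 * m"] by linarith
  next
    case False
    have others: "m dvd sum weight g" if g: "g \<in> P - {ba, bb}" for g
    proof -
      have "n \<notin> g" "n + 1 \<notin> g" using disj g ba bb by blast+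
      moreover have "g \<in> blocks" using g P(1) by blast
      ultimately show ?thesis
        using finite_block_weight[of g] m_dvd_sum_weight_fano[of g] dvd_trans[OF m_dvd_n, of "sum weight g"]
        by blast
    qed
    have "m dvd sum (sum weight) {ba, bb}"
      by (rule dvd_sum_subset[OF finite_P _ dvd_trans[OF m_dvd_n total]]) (use ba(1) bb(1) others in auto)
    then have "m dvd sum weight ba + sum weight bb" using False by simp
    moreover have "ba \<inter> bb = {}" using disj ba(1) bb(1) False by blast
    ultimately show False using infinity_blocks_weight[OF ba_block ba(2) bb_block bb(2)] by blast
  qed
qed

lemma exists_sts_without_parallel_class:
  "\<exists>(V::nat set) B. steiner_triple_system V B \<and> card V = nat n + 2 \<and> \<not> (\<exists>P. parallel_class V B P)"
proof (intro exI conjI)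
  have inj: "inj_on nat points" by (rule inj_onI) (simp add: points_def eq_nat_nat_iff)
  show "steiner_triple_system (nat ` points) ((`) nat ` blocks)"
    using steiner_triple_system_image[OF inj steiner_triple_system] .
  show "card (nat ` points) = nat n + 2"
    using card_image[OF inj] n_pos by (simp add: points_def)
  show "\<not> (\<exists>P. parallel_class (nat ` points) ((`) nat ` blocks) P)"
    using parallel_class_preimage[OF inj blocks_subset] no_parallel_class by blast
qed

end

lemma ord_mod_5_neg2: "ord_mod 5 (-2) = 4"
proof -
  let ?d = "ord 5 (3::nat)"
  have "?d dvd 4" "\<not> ?d dvd 1" "\<not> ?d dvd 2"
    unfolding ord_divides[symmetric] by (simp_all add: cong_def)
  moreover have "?d \<le> 4" using \<open>?d dvd 4\<close> by (rule dvd_imp_le) simp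
  then have "?d = 0 \<or> ?d = 1 \<or> ?d = 2 \<or> ?d = 3 \<or> ?d = 4" by presburger
  ultimately have "?d = 4" by auto
  then show ?thesis by (simp add: ord_mod_def)
qed

lemma power_25_mod_30: "(25::nat) ^ Suc k mod 30 = 25"
proof (induction k)
  case (Suc k)
  have "(25::nat) ^ Suc (Suc k) mod 30 = 25 * (25 ^ Suc k mod 30) mod 30"
    by (simp add: mod_mult_right_eq)
  then show ?case using Suc by simp
qed simp

lemma infinite_V_set: "infinite V_set"
proof -
  define f where "f k = (25::nat) ^ Suc k + 2" for k
  have "f k \<in> V_set" for k
  proof -
    have "f k mod 30 = ((25::nat) ^ Suc k mod 30 + 2) mod 30"
      unfolding f_def by (rule mod_add_left_eq[symmetric])
    also have "\<dots> = 27" using power_25_mod_30[of k] by simp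
    finally have "f k mod 30 = 27" .
    moreover have "ord_mod p (-2) mod 4 = 0" if p: "prime p" "p dvd f k - 2" for p
    proof -
      have "f k - 2 = 5 ^ (2 * Suc k)" by (simp add: f_def power_mult)
      then have "p dvd 5 ^ (2 * Suc k)" using p(2) by simp
      then have "p dvd 5" using prime_dvd_power[OF p(1)] by blast
      then have "p = 5" using p(1) primes_dvd_imp_eq[of p 5] by simp
      then show ?thesis using ord_mod_5_neg2 by simp
    qed
    ultimately show ?thesis unfolding V_set_def by (simp add: f_def)
  qed
  moreover have "inj f" unfolding f_def inj_def by (simp add: power_inject_exp)
  ultimately show ?thesis using range_inj_infinite infinite_super by (metis image_subset_iff)
qed

lemma V_set_sts:
  assumes v: "v \<in> V_set"
  shows "\<exists>(V::nat set) B. steiner_triple_system V B \<and> card V = v \<and> \<not> (\<exists>P. parallel_class V B P)"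
proof -
  have v_mod: "v mod 30 = 27"
    and ord: "\<And>p. prime p \<Longrightarrow> p dvd v - 2 \<Longrightarrow> ord_mod p (-2) mod 4 = 0"
    using v unfolding V_set_def by auto
  have "v = 30 * (v div 30) + 27" using v_mod div_mult_mod_eq[of v 30] by linarith
  then obtain q where q: "v = 30 * q + 27" by blast
  define n where "n = int (v - 2)"
  define m where "m = n div 5"
  have n_eq: "n = 5 * m" and m_odd: "odd m" and not_3: "\<not> 3 dvd n"
    unfolding m_def n_def q by presburger+
  interpret sts_construction m n
  proof
    show "m > 0" unfolding m_def n_def q by simp
    show "odd m" by (rule m_odd)
    show "ord_mod p (-2) mod 4 = 0" if "prime p" "int p dvd m" for p
    proof -
      have "int p dvd n" using that(2) n_eq by simp
      then show ?thesis using ord[OF that(1)] by (simp add: n_def)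
    qed
  qed (use n_eq not_3 in simp_all)
  have "nat n + 2 = v" using q n_def by simp
  then show ?thesis using exists_sts_without_parallel_class by simp
qed

theorem theorem1:
  shows "infinite V_set \<and>
    (\<forall>v\<in>V_set. \<exists>(V::nat set) B. steiner_triple_system V B \<and> card V = v \<and>
        \<not> (\<exists>P. parallel_class V B P))"
  using infinite_V_set V_set_sts by blast

end
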